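(* Let $M$ be a finite set of alternatives, $\mathcal{R}$ the set of all weak preference orders on $M$, and $\varphi:\mathcal{R}\to\Delta(M)$ a deterministic mechanism, i.e., for every $R\in\mathcal{R}$ the lottery $\varphi(R)$ puts probability $1$ on a single alternative. Then $\varphi$ is strategyproof if and only if it is separation monotonic.
   Context: A preference order is a complete, transitive binary relation $R$ on $M$; $a\,I\,b$ means $a\,R\,b$ and $b\,R\,a$, $a\,P\,b$ means $a\,R\,b$ but not $b\,R\,a$. Every preference order is written $M_1\,P\,\cdots\,P\,M_K$ with $(M_k)$ the partition of $M$ into nonempty indifference classes, ordered so that $a\,P\,b$ whenever $a\in M_k$, $b\in M_{k'}$, $k<k'$. A mechanism is a map $\varphi:\mathcal{R}\to\Delta(M)$; for $A\subseteq M$, $\varphi_A(R)=\sum_{a\in A}(\varphi(R))_a$. A lottery $x$ first order-stochastically dominates $y$ at $R$ if $\sum_{j:\, j R a}x_j\ge\sum_{j:\, j R a}y_j$ for every $a\in M$. $\varphi$ is strategyproof if for all $R,R'\in\mathcal{R}$, $\varphi(R)$ first order-stochastically dominates $\varphi(R')$ at $R$. A separation is a pair $(R,R')$ such that, with $R=M_1\,P\,\cdots\,P\,M_K$, there are $\kappa\in\{1,\dots,K\}$ and a partition of $M_\kappa$ into disjoint nonempty $M_\kappa^1,M_\kappa^2$ with $R'=M_1\,P'\,\cdots\,P'\,M_{\kappa-1}\,P'\,M_\kappa^1\,P'\,M_\kappa^2\,P'\,M_{\kappa+1}\,P'\,\cdots\,P'\,M_K$ (indifference within each listed set). $\varphi$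 is separation monotonic if for every separation $(R,R')$: (responsiveness) $\varphi_{M_\kappa^1}(R')\ge\varphi_{M_\kappa^1}(R)$ and $\varphi_{M_\kappa^2}(R')\le\varphi_{M_\kappa^2}(R)$; and (directness) if $\varphi_{M_k}(R)\ne\varphi_{M_k}(R')$ for some $k\in\{1,\dots,K\}$, then $\varphi_{M_\kappa^1}(R')\ne\varphi_{M_\kappa^1}(R)$ and $\varphi_{M_\kappa^2}(R')\ne\varphi_{M_\kappa^2}(R)$. *)

theory Defs
  imports Complex_Main
begin

(* Preferences are binary relations on the alternative set M, given as predicates;
   only their restriction to M matters. *)

definition pref_order :: "'a set \<Rightarrow> ('a \<Rightarrow> 'a \<Rightarrow> bool) \<Rightarrow> bool" where
  "pref_order M R \<longleftrightarrow>
     (\<forall>a\<in>M. \<forall>b\<in>M. R a b \<or> R b a) \<and>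
     (\<forall>a\<in>M. \<forall>b\<in>M. \<forall>c\<in>M. R a b \<longrightarrow> R b c \<longrightarrow> R a c)"

(* the set of all preference orders: relations that are complete and transitive on M
   and (to identify each order with a single object) false outside M *)
definition prefs :: "'a set \<Rightarrow> ('a \<Rightarrow> 'a \<Rightarrow> bool) set" where
  "prefs M = {R. pref_order M R \<and> (\<forall>a b. R a b \<longrightarrow> a \<in> M \<and> b \<in> M)}"

definition lottery :: "'a set \<Rightarrow> ('a \<Rightarrow> real) \<Rightarrow> bool" where
  "lottery M x \<longleftrightarrow> (\<forall>a\<in>M. x a \<ge> 0) \<and> (\<forall>a. a \<notin> M \<longrightarrow> x a = 0) \<and> (\<Sum>a\<in>M. x a) = 1"

definition mechanism :: "'a set \<Rightarrow> (('a \<Rightarrow> 'a \<Rightarrow> bool) \<Rightarrow> 'a \<Rightarrow> real) \<Rightarrow> bool" where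
  "mechanism M \<phi> \<longleftrightarrow> (\<forall>R\<in>prefs M. lottery M (\<phi> R))"

definition deterministic :: "'a set \<Rightarrow> (('a \<Rightarrow> 'a \<Rightarrow> bool) \<Rightarrow> 'a \<Rightarrow> real) \<Rightarrow> bool" where
  "deterministic M \<phi> \<longleftrightarrow> (\<forall>R\<in>prefs M. \<exists>a\<in>M. \<phi> R a = 1)"

definition prob_set :: "('a \<Rightarrow> real) \<Rightarrow> 'a set \<Rightarrow> real" where
  "prob_set x A = (\<Sum>a\<in>A. x a)"

definition sd_dominates :: "'a set \<Rightarrow> ('a \<Rightarrow> 'a \<Rightarrow> bool) \<Rightarrow> ('a \<Rightarrow> real) \<Rightarrow> ('a \<Rightarrow> real) \<Rightarrow> bool" where
  "sd_dominates M R x y \<longleftrightarrow>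
     (\<forall>a\<in>M. prob_set x {j\<in>M. R j a} \<ge> prob_set y {j\<in>M. R j a})"

definition strategyproof :: "'a set \<Rightarrow> (('a \<Rightarrow> 'a \<Rightarrow> bool) \<Rightarrow> 'a \<Rightarrow> real) \<Rightarrow> bool" where
  "strategyproof M \<phi> \<longleftrightarrow> (\<forall>R\<in>prefs M. \<forall>R'\<in>prefs M. sd_dominates M R (\<phi> R) (\<phi> R'))"

definition indiff_classes :: "'a set \<Rightarrow> ('a \<Rightarrow> 'a \<Rightarrow> bool) \<Rightarrow> 'a set set" where
  "indiff_classes M R = {{b\<in>M. R a b \<and> R b a} | a. a \<in> M}"

(* (R, R') is a separation splitting the indifference class C = M_kappa of R into
   C1 = M_kappa^1 (now strictly preferred) and C2 = M_kappa^2; all other comparisons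
   are unchanged. *)
definition separation_at ::
  "'a set \<Rightarrow> ('a \<Rightarrow> 'a \<Rightarrow> bool) \<Rightarrow> ('a \<Rightarrow> 'a \<Rightarrow> bool) \<Rightarrow> 'a set \<Rightarrow> 'a set \<Rightarrow> 'a set \<Rightarrow> bool" where
  "separation_at M R R' C C1 C2 \<longleftrightarrow>
     R \<in> prefs M \<and> R' \<in> prefs M \<and>
     C \<in> indiff_classes M R \<and> C1 \<noteq> {} \<and> C2 \<noteq> {} \<and> C1 \<inter> C2 = {} \<and> C1 \<union> C2 = C \<and>
     (\<forall>a\<in>M. \<forall>b\<in>M. R' a b \<longleftrightarrow>
        (if a \<in> C \<and> b \<in> C then a \<in> C1 \<or> b \<in> C2 else R a b))"

definition separation_monotonic :: "'a set \<Rightarrow> (('a \<Rightarrow> 'a \<Rightarrow> bool) \<Rightarrow> 'a \<Rightarrow> real) \<Rightarrow> bool" where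
  "separation_monotonic M \<phi> \<longleftrightarrow>
     (\<forall>R R' C C1 C2. separation_at M R R' C C1 C2 \<longrightarrow>
        (prob_set (\<phi> R') C1 \<ge> prob_set (\<phi> R) C1 \<and>
         prob_set (\<phi> R') C2 \<le> prob_set (\<phi> R) C2) \<and>
        ((\<exists>D\<in>indiff_classes M R. prob_set (\<phi> R) D \<noteq> prob_set (\<phi> R') D) \<longrightarrow>
           prob_set (\<phi> R') C1 \<noteq> prob_set (\<phi> R) C1 \<and>
           prob_set (\<phi> R') C2 \<noteq> prob_set (\<phi> R) C2))"

end

theory Submission
  imports Defs
begin

(* For a deterministic mechanism let f R be the alternative chosen at R. Strategyproofness says
   R (f R) (f R') for all R, R'; on a separation (R, R') separation monotonicity says exactly that
   R (f R) (f R') and R' (f R') (f R). So it suffices to show that strategyproofness along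
   separations implies strategyproofness.
   A refinement F of K is reached from K by finitely many separations, hence f F and f K are
   K-indifferent. For b = f R', a few refinement and separation steps show that b is also chosen
   at the order ranking b strictly above all other alternatives, and therefore at the order that
   ranks b first and agrees with R elsewhere. This order and R both refine the order obtained from
   R by merging everything weakly R-above b into a single class, so f R is weakly R-above b. *)

section \<open>Preference orders and indifference classes\<close>

lemma prefsD:
  assumes "R \<in> prefs M"
  shows prefs_domain: "R a b \<Longrightarrow> a \<in> M \<and> b \<in> M"
    and prefs_total: "a \<in> M \<Longrightarrow> b \<in> M \<Longrightarrow> R a b \<or> R b a"
    and prefs_trans: "R a b \<Longrightarrow> R b c \<Longrightarrow> R a c"
proof -
  have dom: "R a b \<Longrightarrow> a \<in> M \<and> b \<in> M" for a b
    using assms unfolding prefs_def by blast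
  show "R a b \<Longrightarrow> a \<in> M \<and> b \<in> M" by (rule dom)
  show "a \<in> M \<Longrightarrow> b \<in> M \<Longrightarrow> R a b \<or> R b a"
    using assms unfolding prefs_def pref_order_def by blast
  show "R a b \<Longrightarrow> R b c \<Longrightarrow> R a c"
    using assms dom[of a b] dom[of b c] unfolding prefs_def pref_order_def by blast
qed

lemma prefs_refl: "R \<in> prefs M \<Longrightarrow> a \<in> M \<Longrightarrow> R a a"
  using prefs_total[of R M a a] by simp

lemma prefsI:
  assumes "\<And>a b. R a b \<Longrightarrow> a \<in> M \<and> b \<in> M"
    and "\<And>a b. a \<in> M \<Longrightarrow> b \<in> M \<Longrightarrow> R a b \<or> R b a"
    and "\<And>a b c. R a b \<Longrightarrow> R b c \<Longrightarrow> R a c"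
  shows "R \<in> prefs M"
  unfolding prefs_def pref_order_def using assms by (simp add: Ball_def)

definition indiff_class :: "'a set \<Rightarrow> ('a \<Rightarrow> 'a \<Rightarrow> bool) \<Rightarrow> 'a \<Rightarrow> 'a set" where
  "indiff_class M R a = {b \<in> M. R a b \<and> R b a}"

lemma indiff_classes_eq: "indiff_classes M R = indiff_class M R ` M"
  unfolding indiff_classes_def indiff_class_def by auto

lemma same_indiff_classes_iff:
  assumes R: "R \<in> prefs M" and "a \<in> M" "b \<in> M"
  shows "(\<forall>D\<in>indiff_classes M R. a \<in> D \<longleftrightarrow> b \<in> D) \<longleftrightarrow> R a b \<and> R b a"
proof
  assume "\<forall>D\<in>indiff_classes M R. a \<in> D \<longleftrightarrow> b \<in> D"
  moreover have "a \<in> indiff_class M R a"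
    using assms prefs_refl[OF R] unfolding indiff_class_def by simp
  ultimately have "b \<in> indiff_class M R a"
    using \<open>a \<in> M\<close> unfolding indiff_classes_eq by blast
  then show "R a b \<and> R b a" unfolding indiff_class_def by simp
next
  assume "R a b \<and> R b a"
  then show "\<forall>D\<in>indiff_classes M R. a \<in> D \<longleftrightarrow> b \<in> D"
    using assms prefs_trans[OF R] unfolding indiff_classes_eq indiff_class_def by blast
qed

lemma indiff_class_iff:
  assumes R: "R \<in> prefs M" and a: "a \<in> indiff_class M R c"
  shows "b \<in> indiff_class M R c \<longleftrightarrow> b \<in> M \<and> R a b \<and> R b a"
  using a prefs_trans[OF R] unfolding indiff_class_def by blast

definition upper_tier :: "'a set \<Rightarrow> 'a set \<Rightarrow> 'a \<Rightarrow> 'a \<Rightarrow> bool" where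
  "upper_tier M U a b \<longleftrightarrow> a \<in> M \<and> b \<in> M \<and> (a \<in> U \<or> b \<notin> U)"

lemma upper_tier_prefs: "upper_tier M U \<in> prefs M"
  by (rule prefsI) (auto simp: upper_tier_def)

lemma indiff_class_upper_tier: "U \<subseteq> M \<Longrightarrow> a \<in> U \<Longrightarrow> indiff_class M (upper_tier M U) a = U"
  unfolding indiff_class_def upper_tier_def by auto

section \<open>Separations\<close>

lemma separation_atD:
  assumes sep: "separation_at M R R' C C1 C2"
  obtains c where "R \<in> prefs M" "R' \<in> prefs M" "c \<in> M" "C = indiff_class M R c"
    "C1 \<inter> C2 = {}" "C1 \<union> C2 = C"
    "\<And>a b. a \<in> C \<Longrightarrow> b \<in> C \<Longrightarrow> R' a b \<longleftrightarrow> a \<in> C1 \<or> b \<in> C2"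
    "\<And>a b. a \<in> M \<Longrightarrow> b \<in> M \<Longrightarrow> \<not> (a \<in> C \<and> b \<in> C) \<Longrightarrow> R' a b \<longleftrightarrow> R a b"
proof -
  have prefs: "R \<in> prefs M" "R' \<in> prefs M" and parts: "C1 \<inter> C2 = {}" "C1 \<union> C2 = C"
    and R': "\<forall>a\<in>M. \<forall>b\<in>M. R' a b \<longleftrightarrow> (if a \<in> C \<and> b \<in> C then a \<in> C1 \<or> b \<in> C2 else R a b)"
    using sep unfolding separation_at_def by simp_all
  obtain c where c: "c \<in> M" "C = indiff_class M R c"
    using sep unfolding separation_at_def indiff_classes_eq by auto
  then have "C \<subseteq> M" unfolding indiff_class_def by auto
  with R' have "R' a b \<longleftrightarrow> a \<in> C1 \<or> b \<in> C2" if "a \<in> C" "b \<in> C" for a b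
    using that by (simp add: subset_iff)
  with prefs c parts R' show thesis by (intro that) auto
qed

definition split_class :: "('a \<Rightarrow> 'a \<Rightarrow> bool) \<Rightarrow> 'a set \<Rightarrow> 'a set \<Rightarrow> 'a \<Rightarrow> 'a \<Rightarrow> bool" where
  "split_class R C C1 a b \<longleftrightarrow> R a b \<and> (a \<in> C \<and> b \<in> C \<longrightarrow> a \<in> C1 \<or> b \<notin> C1)"

lemma split_class_le: "split_class R C C1 \<le> R"
  unfolding split_class_def by auto

lemma split_class_trivial: "C1 = {} \<or> C \<subseteq> C1 \<Longrightarrow> split_class R C C1 = R"
  unfolding split_class_def by fastforce

lemma split_class_prefs:
  assumes R: "R \<in> prefs M"
  shows "split_class R (indiff_class M R x) C1 \<in> prefs M"
proof (rule prefsI)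
  let ?C = "indiff_class M R x"
  show "a \<in> M \<and> b \<in> M" if "split_class R ?C C1 a b" for a b
    using that prefs_domain[OF R] unfolding split_class_def by blast
  show "split_class R ?C C1 a b \<or> split_class R ?C C1 b a" if "a \<in> M" "b \<in> M" for a b
  proof (cases "a \<in> ?C \<and> b \<in> ?C")
    case True
    then have "R a b" "R b a" using prefs_trans[OF R] unfolding indiff_class_def by blast+
    then show ?thesis unfolding split_class_def by blast
  next
    case False
    then show ?thesis using prefs_total[OF R that] unfolding split_class_def by blast
  qed
  show "split_class R ?C C1 a c" if ab: "split_class R ?C C1 a b" and bc: "split_class R ?C C1 b c"
    for a b c
  proof -
    have "R a b" "R b c" using ab bc unfolding split_class_def by simp_all
    moreover have "b \<in> ?C" if "a \<in> ?C" "c \<in> ?C"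
      using that \<open>R a b\<close> \<open>R b c\<close> prefs_domain[OF R] prefs_trans[OF R]
      unfolding indiff_class_def by blast
    ultimately show ?thesis using ab bc prefs_trans[OF R] unfolding split_class_def by blast
  qed
qed

lemma separation_at_split_class:
  assumes R: "R \<in> prefs M" and x: "x \<in> M" and C: "C = indiff_class M R x"
    and C1: "C1 \<subseteq> C" "C1 \<noteq> {}" "C1 \<noteq> C"
  shows "separation_at M R (split_class R C C1) C C1 (C - C1)"
  unfolding separation_at_def
proof (intro conjI)
  show "split_class R C C1 \<in> prefs M" using split_class_prefs[OF R] C by simp
  show "C \<in> indiff_classes M R" using x C by (simp add: indiff_classes_eq)
  have "R a b" if "a \<in> C" "b \<in> C" for a b
    using that prefs_trans[OF R] unfolding C indiff_class_def by blast
  then show "\<forall>a\<in>M. \<forall>b\<in>M. split_class R C C1 a b \<longleftrightarrow>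
      (if a \<in> C \<and> b \<in> C then a \<in> C1 \<or> b \<in> C - C1 else R a b)"
    unfolding split_class_def by auto
qed (use R C1 in auto)

lemma split_class_between:
  assumes F: "F \<in> prefs M" and K: "K \<in> prefs M" and FK: "F \<le> K" and "F \<noteq> K"
  obtains x C1 where "x \<in> M" "C1 \<subseteq> indiff_class M K x"
    "F \<le> split_class K (indiff_class M K x) C1" "split_class K (indiff_class M K x) C1 \<noteq> K"
proof -
  from FK \<open>F \<noteq> K\<close> have "\<not> K \<le> F" using antisym by metis
  then obtain x y where Kxy: "K x y" and Fxy: "\<not> F x y" by (auto simp: le_fun_def)
  then have xy: "x \<in> M" "y \<in> M" using prefs_domain[OF K] by blast+
  then have "F y x" "F y y" using Fxy prefs_total[OF F] by blast+
  then have "K y x" using predicate2D[OF FK] by blast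
  define C where "C = indiff_class M K x"
  define C1 where "C1 = {a \<in> C. F a y}"
  have "F \<le> split_class K C C1"
  proof (intro predicate2I)
    fix a b assume "F a b"
    moreover have "a \<in> C1" if "a \<in> C" "b \<in> C1"
      using that \<open>F a b\<close> prefs_trans[OF F] unfolding C1_def by blast
    ultimately show "split_class K C C1 a b" using predicate2D[OF FK] unfolding split_class_def by blast
  qed
  moreover have "x \<notin> C1" "y \<in> C1" "x \<in> C" "y \<in> C"
    using Fxy xy Kxy \<open>K y x\<close> \<open>F y y\<close> prefs_refl[OF K] unfolding C1_def C_def indiff_class_def by auto
  then have "\<not> split_class K C C1 x y" unfolding split_class_def by blast
  with Kxy have "split_class K C C1 \<noteq> K" by metis
  moreover have "C1 \<subseteq> C" unfolding C1_def by blast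
  ultimately show thesis using that xy(1) unfolding C_def by blast
qed

section \<open>Deterministic mechanisms\<close>

definition point_mass :: "'a \<Rightarrow> 'a \<Rightarrow> real" where
  "point_mass a b = (if b = a then 1 else 0)"

lemma prob_set_point_mass: "finite A \<Longrightarrow> prob_set (point_mass a) A = (if a \<in> A then 1 else 0)"
  unfolding prob_set_def point_mass_def by simp

lemma lottery_point_mass:
  assumes M: "finite M" and x: "lottery M x" and a: "a \<in> M" "x a = 1"
  shows "x = point_mass a"
proof
  fix b
  have nonneg: "\<forall>b\<in>M - {a}. 0 \<le> x b" and out: "b \<notin> M \<Longrightarrow> x b = 0"
    using x unfolding lottery_def by auto
  have "(\<Sum>b\<in>M. x b) = x a + (\<Sum>b\<in>M - {a}. x b)"
    using M a(1) by (rule sum.remove)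
  then have "(\<Sum>b\<in>M - {a}. x b) = 0" using x a(2) unfolding lottery_def by simp
  then have "\<forall>b\<in>M - {a}. x b = 0" using sum_nonneg_eq_0_iff[of "M - {a}" x] M nonneg by simp
  then show "x b = point_mass a b" using out a(2) unfolding point_mass_def by (cases "b \<in> M") auto
qed

lemma sd_dominates_point_mass_iff:
  assumes M: "finite M" and R: "R \<in> prefs M" and a: "a \<in> M" and b: "b \<in> M"
  shows "sd_dominates M R (point_mass a) (point_mass b) \<longleftrightarrow> R a b"
proof -
  have "sd_dominates M R (point_mass a) (point_mass b) \<longleftrightarrow> (\<forall>c\<in>M. R b c \<longrightarrow> R a c)"
    using M a b unfolding sd_dominates_def by (simp add: prob_set_point_mass)
  also have "\<dots> \<longleftrightarrow> R a b"
    using b prefs_refl[OF R] prefs_trans[OF R] by blast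
  finally show ?thesis .
qed

(* The left-hand side is responsiveness and directness for a switch from the point mass at s
   to the point mass at t. *)
lemma separation_switch_iff:
  assumes sep: "separation_at M R R' C C1 C2" and s: "s \<in> M" and t: "t \<in> M"
  shows "((s \<in> C1 \<longrightarrow> t \<in> C1) \<and> (t \<in> C2 \<longrightarrow> s \<in> C2) \<and>
      (\<not> (R s t \<and> R t s) \<longrightarrow> (s \<in> C1 \<longleftrightarrow> t \<notin> C1) \<and> (s \<in> C2 \<longleftrightarrow> t \<notin> C2)))
    \<longleftrightarrow> R s t \<and> R' t s"
proof -
  obtain c where R: "R \<in> prefs M" and C: "C = indiff_class M R c"
    and parts: "C1 \<inter> C2 = {}" "C1 \<union> C2 = C"
    and R'_in: "\<And>a b. a \<in> C \<Longrightarrow> b \<in> C \<Longrightarrow> R' a b \<longleftrightarrow> a \<in> C1 \<or> b \<in> C2"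
    and R'_out: "\<And>a b. a \<in> M \<Longrightarrow> b \<in> M \<Longrightarrow> \<not> (a \<in> C \<and> b \<in> C) \<Longrightarrow> R' a b \<longleftrightarrow> R a b"
    using sep by (rule separation_atD) blast
  have in_C_iff: "a \<in> C \<Longrightarrow> b \<in> C \<longleftrightarrow> b \<in> M \<and> R a b \<and> R b a" for a b
    unfolding C by (rule indiff_class_iff[OF R])
  show ?thesis
  proof
    assume resp: "(s \<in> C1 \<longrightarrow> t \<in> C1) \<and> (t \<in> C2 \<longrightarrow> s \<in> C2) \<and>
      (\<not> (R s t \<and> R t s) \<longrightarrow> (s \<in> C1 \<longleftrightarrow> t \<notin> C1) \<and> (s \<in> C2 \<longleftrightarrow> t \<notin> C2))"
    have indiff: "R s t \<and> R t s"
    proof (rule ccontr)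
      assume "\<not> (R s t \<and> R t s)"
      with resp parts have "s \<in> C" "t \<in> C" by blast+
      with in_C_iff \<open>\<not> (R s t \<and> R t s)\<close> show False by blast
    qed
    have "R' t s"
    proof (cases "s \<in> C \<and> t \<in> C")
      case True
      then show ?thesis using R'_in resp parts by blast
    next
      case False
      then show ?thesis using R'_out[OF t s] indiff by blast
    qed
    with indiff show "R s t \<and> R' t s" by blast
  next
    assume sp: "R s t \<and> R' t s"
    have "R t s"
      using sp R'_out[OF t s] in_C_iff parts by (cases "s \<in> C \<and> t \<in> C") blast+
    moreover have "s \<in> C \<longleftrightarrow> t \<in> C" using in_C_iff sp \<open>R t s\<close> s t by blast
    ultimately show "(s \<in> C1 \<longrightarrow> t \<in> C1) \<and> (t \<in> C2 \<longrightarrow> s \<in> C2) \<and>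
      (\<not> (R s t \<and> R t s) \<longrightarrow> (s \<in> C1 \<longleftrightarrow> t \<notin> C1) \<and> (s \<in> C2 \<longleftrightarrow> t \<notin> C2))"
      using sp R'_in parts by blast
  qed
qed

lemma separation_monotone_point_mass_iff:
  assumes M: "finite M" and sep: "separation_at M R R' C C1 C2" and s: "s \<in> M" and t: "t \<in> M"
  shows "((prob_set (point_mass t) C1 \<ge> prob_set (point_mass s) C1 \<and>
          prob_set (point_mass t) C2 \<le> prob_set (point_mass s) C2) \<and>
         ((\<exists>D\<in>indiff_classes M R. prob_set (point_mass s) D \<noteq> prob_set (point_mass t) D) \<longrightarrow>
           prob_set (point_mass t) C1 \<noteq> prob_set (point_mass s) C1 \<and>
           prob_set (point_mass t) C2 \<noteq> prob_set (point_mass s) C2))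
    \<longleftrightarrow> R s t \<and> R' t s"
proof -
  obtain c where R: "R \<in> prefs M" and "C1 \<union> C2 = indiff_class M R c"
    using sep by (rule separation_atD) blast
  then have "finite C1" "finite C2"
    using M finite_subset[of _ M] unfolding indiff_class_def by blast+
  moreover have "\<forall>D\<in>indiff_classes M R. finite D"
    using M unfolding indiff_classes_eq indiff_class_def by auto
  moreover have "(\<forall>D\<in>indiff_classes M R. s \<in> D \<longleftrightarrow> t \<in> D) \<longleftrightarrow> R s t \<and> R t s"
    by (rule same_indiff_classes_iff[OF R s t])
  ultimately show ?thesis
    using separation_switch_iff[OF sep s t] by (auto simp: prob_set_point_mass)
qed

(* Only meaningful for R \<in> prefs M, where a deterministic mechanism has a chosen alternative. *)
definition outcome :: "'a set \<Rightarrow> (('a \<Rightarrow> 'a \<Rightarrow> bool) \<Rightarrow> 'a \<Rightarrow> real) \<Rightarrow> ('a \<Rightarrow> 'a \<Rightarrow> bool) \<Rightarrow> 'a" where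
  "outcome M \<phi> R = (SOME a. a \<in> M \<and> \<phi> R a = 1)"

locale deterministic_mechanism =
  fixes M :: "'a set" and \<phi> :: "('a \<Rightarrow> 'a \<Rightarrow> bool) \<Rightarrow> 'a \<Rightarrow> real"
  assumes finite_M: "finite M" and mechanism: "mechanism M \<phi>" and deterministic: "deterministic M \<phi>"
begin

lemma
  assumes R: "R \<in> prefs M"
  shows outcome_in: "outcome M \<phi> R \<in> M" and mechanism_eq_outcome: "\<phi> R = point_mass (outcome M \<phi> R)"
proof -
  have "\<exists>a. a \<in> M \<and> \<phi> R a = 1" using deterministic R unfolding deterministic_def by blast
  then have "outcome M \<phi> R \<in> M \<and> \<phi> R (outcome M \<phi> R) = 1"
    unfolding outcome_def by (rule someI_ex)
  moreover have "lottery M (\<phi> R)" using mechanism R unfolding mechanism_def by blast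
  ultimately show "outcome M \<phi> R \<in> M" "\<phi> R = point_mass (outcome M \<phi> R)"
    using lottery_point_mass[OF finite_M] by blast+
qed

lemma strategyproof_iff_outcome:
  "strategyproof M \<phi> \<longleftrightarrow> (\<forall>R\<in>prefs M. \<forall>R'\<in>prefs M. R (outcome M \<phi> R) (outcome M \<phi> R'))"
  unfolding strategyproof_def
  using mechanism_eq_outcome sd_dominates_point_mass_iff[OF finite_M _ outcome_in outcome_in] by simp

lemma separation_monotonic_iff_outcome:
  "separation_monotonic M \<phi> \<longleftrightarrow> (\<forall>R R' C C1 C2. separation_at M R R' C C1 C2 \<longrightarrow>
     R (outcome M \<phi> R) (outcome M \<phi> R') \<and> R' (outcome M \<phi> R') (outcome M \<phi> R))"
  unfolding separation_monotonic_def
  apply (intro all_cong1 imp_cong refl)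
  subgoal premises sep for R R' C C1 C2
  proof -
    have "R \<in> prefs M" "R' \<in> prefs M" using sep unfolding separation_at_def by simp_all
    then show ?thesis
      using separation_monotone_point_mass_iff[OF finite_M sep outcome_in outcome_in]
      by (simp add: mechanism_eq_outcome)
  qed
  done

end

section \<open>Strategyproofness along separations implies strategyproofness\<close>

locale locally_strategyproof =
  fixes M :: "'a set" and f :: "('a \<Rightarrow> 'a \<Rightarrow> bool) \<Rightarrow> 'a"
  assumes finite_M: "finite M"
    and choice_in: "R \<in> prefs M \<Longrightarrow> f R \<in> M"
    and strategyproof_at_separation:
      "separation_at M R R' C C1 C2 \<Longrightarrow> R (f R) (f R') \<and> R' (f R') (f R)"
begin

lemma split_class_choice:
  assumes R: "R \<in> prefs M" and x: "x \<in> M" and C: "C = indiff_class M R x" and C1: "C1 \<subseteq> C"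
  defines "F \<equiv> split_class R C C1"
  shows split_class_choice_indiff: "R (f R) (f F) \<and> R (f F) (f R)"
    and split_class_choice_stays: "f R \<in> C1 \<Longrightarrow> f F \<in> C1"
proof -
  have F: "F \<in> prefs M" unfolding F_def C by (rule split_class_prefs[OF R])
  have sp: "R (f R) (f F) \<and> F (f F) (f R)"
  proof (cases "C1 = {} \<or> C \<subseteq> C1")
    case True
    then show ?thesis
      using prefs_refl[OF R choice_in[OF R]] unfolding F_def split_class_trivial[OF True] by simp
  next
    case False
    with C1 have "separation_at M R F C C1 (C - C1)"
      using separation_at_split_class[OF R x C] unfolding F_def by blast
    then show ?thesis by (rule strategyproof_at_separation)
  qed
  moreover have "F a b \<Longrightarrow> R a b" for a b unfolding F_def split_class_def by blast
  ultimately show indiff: "R (f R) (f F) \<and> R (f F) (f R)" by blast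
  assume "f R \<in> C1"
  then have "f R \<in> M" "R x (f R)" "R (f R) x" using C1 unfolding C indiff_class_def by blast+
  with indiff have "R x (f F)" "R (f F) x" using prefs_trans[OF R] by blast+
  then have "f F \<in> C" using choice_in[OF F] unfolding C indiff_class_def by blast
  with sp \<open>f R \<in> C1\<close> C1 show "f F \<in> C1" unfolding F_def split_class_def by blast
qed

lemma refinement_choice_indiff:
  assumes F: "F \<in> prefs M" and K: "K \<in> prefs M" and FK: "F \<le> K"
  shows "K (f F) (f K) \<and> K (f K) (f F)"
  using K FK
proof (induction "card {(a, b) \<in> M \<times> M. K a b}" arbitrary: K rule: less_induct)
  case less
  note K = \<open>K \<in> prefs M\<close> and FK = \<open>F \<le> K\<close>
  show ?case
  proof (cases "F = K")
    case True
    then show ?thesis using prefs_refl[OF F choice_in[OF F]] by simp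
  next
    case False
    then obtain x C1 where x: "x \<in> M" and C1: "C1 \<subseteq> indiff_class M K x"
      and FK': "F \<le> split_class K (indiff_class M K x) C1"
      and K'K: "split_class K (indiff_class M K x) C1 \<noteq> K"
      using split_class_between[OF F K FK] by blast
    define K' where "K' = split_class K (indiff_class M K x) C1"
    have K': "K' \<in> prefs M" unfolding K'_def by (rule split_class_prefs[OF K])
    have "K' \<le> K" unfolding K'_def by (rule split_class_le)
    with K'K have "{(a, b) \<in> M \<times> M. K' a b} \<subset> {(a, b) \<in> M \<times> M. K a b}"
      using prefs_domain[OF K] unfolding K'_def by (fastforce simp: le_fun_def)
    then have "card {(a, b) \<in> M \<times> M. K' a b} < card {(a, b) \<in> M \<times> M. K a b}"
      using finite_M by (intro psubset_card_mono) (auto intro: finite_subset)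
    from less.hyps[OF this K' FK'[folded K'_def]] have "K (f F) (f K') \<and> K (f K') (f F)"
      using predicate2D[OF \<open>K' \<le> K\<close>] by blast
    moreover have "K (f K) (f K') \<and> K (f K') (f K)"
      using split_class_choice_indiff[OF K x refl C1] unfolding K'_def by blast
    ultimately show ?thesis using prefs_trans[OF K] by blast
  qed
qed

lemma choice_upper_contour_tier:
  assumes R: "R \<in> prefs M" and isolated: "indiff_class M R (f R) = {f R}"
  shows "f (upper_tier M {a \<in> M. R a (f R)}) = f R"
proof -
  define b where "b = f R"
  define U where "U = {a \<in> M. R a b}"
  define V where "V = upper_tier M U"
  define W where "W = split_class V U (U - {b})"
  have b: "b \<in> M" "b \<in> U" unfolding U_def b_def using choice_in[OF R] prefs_refl[OF R] by auto
  have V: "V \<in> prefs M" unfolding V_def by (rule upper_tier_prefs)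
  have class_V: "U = indiff_class M V b"
    unfolding V_def by (rule indiff_class_upper_tier[symmetric]) (use b in \<open>auto simp: U_def\<close>)
  have W: "W \<in> prefs M" unfolding W_def class_V by (rule split_class_prefs[OF V])
  have RV: "R \<le> V"
    using prefs_domain[OF R] prefs_trans[OF R] unfolding V_def upper_tier_def U_def by blast
  have strictly_above: "\<not> R b a" if "a \<in> U - {b}" for a
    using that isolated unfolding U_def b_def indiff_class_def by blast
  have RW: "R \<le> W"
  proof (intro predicate2I)
    fix a c assume "R a c"
    moreover have "a \<in> U - {b}" if "a \<in> U" "c \<in> U - {b}"
      using that \<open>R a c\<close> strictly_above by blast
    ultimately show "W a c" using predicate2D[OF RV] unfolding W_def split_class_def by blast
  qed
  (* b forms a class of its own in W, so f W = b; since W arises from V by splitting off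
     U - {b}, the choice at V cannot lie in U - {b} either. *)
  have "W b (f W)" "W (f W) b"
    using refinement_choice_indiff[OF R W RW] unfolding b_def by blast+
  moreover have "W a c \<longleftrightarrow> V a c \<and> (a \<in> U \<and> c \<in> U \<longrightarrow> a \<in> U - {b} \<or> c \<notin> U - {b})"
    for a c unfolding W_def split_class_def by blast
  ultimately have "f W = b" using b unfolding V_def upper_tier_def by blast
  have "f V \<in> U"
    using refinement_choice_indiff[OF R V RV] choice_in[OF V] unfolding class_V indiff_class_def b_def
    by blast
  moreover have "f V \<notin> U - {b}"
    using split_class_choice_stays[OF V b(1) class_V, of "U - {b}"] \<open>f W = b\<close> unfolding W_def by blast
  ultimately show ?thesis unfolding V_def U_def b_def by blast
qed

lemma choice_top_tier:
  assumes R: "R \<in> prefs M"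
  shows "f (upper_tier M {f R}) = f R"
proof -
  define b where "b = f R"
  define R1 where "R1 = split_class R (indiff_class M R b) {b}"
  define U where "U = {a \<in> M. R1 a b}"
  define V where "V = upper_tier M U"
  define N where "N = split_class V U {b}"
  have b: "b \<in> M" unfolding b_def by (rule choice_in[OF R])
  have R1: "R1 \<in> prefs M" unfolding R1_def by (rule split_class_prefs[OF R])
  have "{b} \<subseteq> indiff_class M R b" using b prefs_refl[OF R b] unfolding indiff_class_def by simp
  then have "f R1 = b"
    using split_class_choice_stays[OF R b refl, of "{b}"] by (simp add: R1_def b_def[symmetric])
  moreover have "indiff_class M R1 b = {b}"
    using b prefs_refl[OF R b] unfolding R1_def split_class_def indiff_class_def by auto
  ultimately have "f V = b"
    using choice_upper_contour_tier[OF R1] unfolding V_def U_def by simp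
  have "b \<in> U" unfolding U_def using prefs_refl[OF R1 b] b by blast
  then have class_V: "U = indiff_class M V b"
    unfolding V_def by (rule indiff_class_upper_tier[symmetric, rotated]) (auto simp: U_def)
  have V: "V \<in> prefs M" unfolding V_def by (rule upper_tier_prefs)
  have N: "N \<in> prefs M" unfolding N_def class_V by (rule split_class_prefs[OF V])
  have "f N = b"
    using split_class_choice_stays[OF V b class_V, of "{b}"] \<open>b \<in> U\<close> \<open>f V = b\<close>
    unfolding N_def by blast
  have NT: "N \<le> upper_tier M {b}"
    using \<open>b \<in> U\<close> unfolding N_def split_class_def V_def upper_tier_def by auto
  have "upper_tier M {b} (f (upper_tier M {b})) b"
    using refinement_choice_indiff[OF N upper_tier_prefs NT] \<open>f N = b\<close> by blast
  then show ?thesis unfolding upper_tier_def b_def by blast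
qed

theorem choice_strategyproof:
  assumes R: "R \<in> prefs M" and R': "R' \<in> prefs M"
  shows "R (f R) (f R')"
proof -
  define b where "b = f R'"
  have b: "b \<in> M" unfolding b_def by (rule choice_in[OF R'])
  define T where "T = upper_tier M {b}"
  define lifted where "lifted = (\<lambda>a c. a \<in> M \<and> c \<in> M \<and> (a = b \<or> c \<noteq> b \<and> R a c))"
  define merged where "merged = (\<lambda>a c. a \<in> M \<and> c \<in> M \<and> (R a b \<or> R a c))"
  have lifted: "lifted \<in> prefs M"
  proof (rule prefsI)
    show "lifted a c \<or> lifted c a" if "a \<in> M" "c \<in> M" for a c
      using that prefs_total[OF R that] unfolding lifted_def by blast
    show "lifted a d" if "lifted a c" "lifted c d" for a c d
      using that prefs_trans[OF R] unfolding lifted_def by blast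
  qed (simp add: lifted_def)
  have merged: "merged \<in> prefs M"
  proof (rule prefsI)
    show "merged a c \<or> merged c a" if "a \<in> M" "c \<in> M" for a c
      using that prefs_total[OF R that] unfolding merged_def by blast
    show "merged a d" if "merged a c" "merged c d" for a c d
      using that prefs_trans[OF R] unfolding merged_def by blast
  qed (simp add: merged_def)
  have "lifted \<le> T" unfolding lifted_def T_def upper_tier_def by auto
  then have "T (f lifted) (f T)" using refinement_choice_indiff[OF lifted] T_def upper_tier_prefs by blast
  then have "f lifted = b" using choice_top_tier[OF R'] unfolding T_def b_def upper_tier_def by simp
  have "R \<le> merged" using prefs_domain[OF R] unfolding merged_def by blast
  moreover have "lifted \<le> merged" using prefs_refl[OF R b] unfolding lifted_def merged_def by auto
  ultimately have "merged (f R) (f merged)" "merged (f merged) (f lifted)"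
    using refinement_choice_indiff[OF R merged] refinement_choice_indiff[OF lifted merged] by blast+
  then have "merged (f R) b" using prefs_trans[OF merged] \<open>f lifted = b\<close> by blast
  then show ?thesis unfolding merged_def b_def by blast
qed
end

theorem corollary1:
  fixes M :: "'a set" and \<phi> :: "('a \<Rightarrow> 'a \<Rightarrow> bool) \<Rightarrow> 'a \<Rightarrow> real"
  assumes "finite M"
    and "mechanism M \<phi>"
    and "deterministic M \<phi>"
  shows "strategyproof M \<phi> \<longleftrightarrow> separation_monotonic M \<phi>"
proof -
  interpret deterministic_mechanism M \<phi> using assms by unfold_locales
  show ?thesis
  proof
    assume "strategyproof M \<phi>"
    then show "separation_monotonic M \<phi>"
      unfolding strategyproof_iff_outcome separation_monotonic_iff_outcome separation_at_def by blast
  next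
    assume "separation_monotonic M \<phi>"
    then interpret locally_strategyproof M "outcome M \<phi>"
      by unfold_locales (use finite_M outcome_in separation_monotonic_iff_outcome in blast)+
    show "strategyproof M \<phi>"
      unfolding strategyproof_iff_outcome using choice_strategyproof by blast
  qed
qed

end
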